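(* Let $(G,N,\theta)_{\mathcal{H}}$ be a modular $\mathcal{H}$-triple with $E=\mathbb{F}_p[\theta]$, $m=\theta(1)$, let $X:N\to\mathrm{GL}_m(E)=A^\times$ be a representation affording $\theta$ realized over $E$, let $A=\mathrm{M}_m(E)$ be the $G$-algebra associated with $(G,N,\theta)_{\mathcal{H}}$ and $X$, and let $\iota:A\to\mathrm{M}_{ms}(\mathbb{F}_p)$ be a unitary $\mathbb{F}_p$-algebra embedding, where $s=[E:\mathbb{F}_p]$. Then there is a function $Y:G\to\mathrm{GL}_{ms}(\mathbb{F}_p)$ such that (1) $Y(g)^{-1}\iota(x)Y(g)=\iota(x^g)$ for all $x\in A$, $g\in G$; (2) $Y(n)=\iota(X(n))$ for all $n\in N$; (3) $Y(gn)=Y(g)Y(n)$ and $Y(ng)=Y(n)Y(g)$ for all $n\in N$, $g\in G$.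
   Context: $p$ is a prime; $F$ a sufficiently large finite field of characteristic $p$, residue field of a $p$-modular system $(\mathcal{K},\mathcal{O},F)$; $\mathcal{H}$ a group of automorphisms of $\mathcal{K}$ preserving $\mathcal{O}$, acting on $F$ and inducing all automorphisms of $F$. A modular $\mathcal{H}$-triple $(G,N,\theta)_{\mathcal{H}}$: $N\trianglelefteq G$ finite, $\theta\in\mathrm{IBr}(N)$ with $G$-stable $\mathcal{H}$-orbit. $\mathbb{F}_p[\theta]$: subfield of $F$ generated over $\mathbb{F}_p$ by the reductions of the values of $\theta$. The $G$-algebra associated with $(G,N,\theta)_{\mathcal{H}}$ and $X$: for $g\in G$ let $\sigma_g\in\mathrm{Gal}(E/\mathbb{F}_p)$ be the unique element such that $n\mapsto X(gng^{-1})^{\sigma_g}$ (entrywise) affords $\theta$ (equivalently the restriction to $E$ of any $\tau\in\mathcal{H}$ with $\theta^\tau=\theta^{g^{-1}}$, $\theta^{g^{-1}}(n)=\theta(g^{-1}ng)$), choose $T_g\in\mathrm{GL}_m(E)$ with $X(gng^{-1})^{\sigma_g}=T_gX(n)T_g^{-1}$ for all $n\in N$, and let $G$ act on $A=\mathrm{M}_m(E)$ by $x^g=T_g^{-1}x^{\sigma_g}T_g$; this is a right action by $\mathbb{F}_p$-algebra automorphisms, with $X(n)^g=X(g^{-1}ng)$ and $(zx)^g=z^{\sigma_g}x^g$ for $z\in E$. *)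

theory Defs
  imports "Jordan_Normal_Form.Matrix" "HOL-Algebra.Coset" "HOL-Algebra.Multiplicative_Group"
begin

definition mat_trace :: "'a::comm_ring_1 mat \<Rightarrow> 'a" where
  "mat_trace A = (\<Sum>i<dim_row A. A $$ (i, i))"

definition mat_inv :: "'a::comm_ring_1 mat \<Rightarrow> 'a mat" where
  "mat_inv A = (SOME B. B \<in> carrier_mat (dim_row A) (dim_row A) \<and>
                        A * B = 1\<^sub>m (dim_row A) \<and> B * A = 1\<^sub>m (dim_row A))"

text \<open>A field automorphism (an element of Gal(E/F_p) when E is a finite field of char p).\<close>
definition field_aut :: "('e::field \<Rightarrow> 'e) \<Rightarrow> bool" where
  "field_aut \<sigma> \<longleftrightarrow> bij \<sigma> \<and> (\<forall>a b. \<sigma> (a + b) = \<sigma> a + \<sigma> b) \<and>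
                   (\<forall>a b. \<sigma> (a * b) = \<sigma> a * \<sigma> b) \<and> \<sigma> 1 = 1"

definition is_subfield :: "'e::field set \<Rightarrow> bool" where
  "is_subfield F \<longleftrightarrow> 0 \<in> F \<and> 1 \<in> F \<and> (\<forall>a\<in>F. \<forall>b\<in>F. a + b \<in> F \<and> a * b \<in> F) \<and>
                     (\<forall>a\<in>F. - a \<in> F \<and> inverse a \<in> F)"

definition generates_field :: "'e::field set \<Rightarrow> bool" where
  "generates_field S \<longleftrightarrow> (\<forall>F. is_subfield F \<and> S \<subseteq> F \<longrightarrow> F = UNIV)"

definition is_matrep :: "('g, 'b) monoid_scheme \<Rightarrow> nat \<Rightarrow> ('g \<Rightarrow> 'e::field mat) \<Rightarrow> bool" where
  "is_matrep N m X \<longleftrightarrow> (\<forall>n\<in>carrier N. X n \<in> carrier_mat m m \<and> invertible_mat (X n)) \<and>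
     (\<forall>a\<in>carrier N. \<forall>b\<in>carrier N. X (a \<otimes>\<^bsub>N\<^esub> b) = X a * X b)"

text \<open>Absolute irreducibility of X (i.e. X stays irreducible over the algebraic closure),
  expressed via Burnside: the E-linear span of X(N) is the full matrix algebra M_m(E).\<close>
definition abs_irreducible :: "'g set \<Rightarrow> nat \<Rightarrow> ('g \<Rightarrow> 'e::field mat) \<Rightarrow> bool" where
  "abs_irreducible N m X \<longleftrightarrow> 0 < m \<and> (\<forall>M\<in>carrier_mat m m. \<exists>c :: 'g \<Rightarrow> 'e.
      \<forall>i<m. \<forall>j<m. M $$ (i, j) = (\<Sum>n\<in>N. c n * X n $$ (i, j)))"

definition galg_act :: "('g \<Rightarrow> 'e \<Rightarrow> 'e) \<Rightarrow> ('g \<Rightarrow> 'e::field mat) \<Rightarrow> 'g \<Rightarrow> 'e mat \<Rightarrow> 'e mat" where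
  "galg_act \<sigma> T g x = mat_inv (T g) * map_mat (\<sigma> g) x * T g"

end

theory Submission
  imports
    Defs
    "HOL-Number_Theory.Residues"
    "Jordan_Normal_Form.Determinant"
begin

(* Every unital embedding of A = M_m(E) into M_ms(F_p) makes F_p^ms an A-module isomorphic to
   E^m, because |E|^m = p^(ms): a nonzero vector fixed by the image of the matrix unit e_00
   spans a copy of the simple module E^m, and counting shows that the copy is everything.
   Hence any two such embeddings are conjugate (Skolem-Noether); applied to iota and to
   x |-> iota(x^g) this gives invertible Y_0(g) with Y_0(g)^-1 iota(x) Y_0(g) = iota(x^g).

   The action x^g does not depend on the choice of (sigma_g, T_g): sigma_g is determined by its
   values on the traces of X, which generate E, and T_g up to a matrix commuting with X(N),
   hence with all of A by absolute irreducibility. Comparing with the data (sigma_g, T_g X(h))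
   and (id, X(n)) gives x^(gh) = X(h)^-1 x^g X(h) and x^n = X(n)^-1 x X(n) for h, n in N.
   Fixing a representative t of each coset gN, with Y_0(t) = iota(X(t)) when t lies in N,
   the function Y(th) = Y_0(t) iota(X(h)) has all the required properties. *)

section \<open>Linear algebra and field automorphisms\<close>

lemma mat_inv_eqI:
  fixes A B :: "'a::comm_ring_1 mat"
  assumes A: "A \<in> carrier_mat n n" and B: "B \<in> carrier_mat n n"
    and AB: "A * B = 1\<^sub>m n" and BA: "B * A = 1\<^sub>m n"
  shows "mat_inv A = B"
proof -
  let ?P = "\<lambda>B. B \<in> carrier_mat (dim_row A) (dim_row A) \<and> A * B = 1\<^sub>m (dim_row A) \<and> B * A = 1\<^sub>m (dim_row A)"
  have "?P B" using A B AB BA by simp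
  hence "?P (mat_inv A)" unfolding mat_inv_def by (rule someI)
  hence C: "mat_inv A \<in> carrier_mat n n" "mat_inv A * A = 1\<^sub>m n" using A by auto
  have "mat_inv A = mat_inv A * (A * B)" using C AB by simp
  also have "\<dots> = (mat_inv A * A) * B" using assoc_mult_mat[OF C(1) A B] by simp
  finally show ?thesis using C B by simp
qed

lemma invertible_matI:
  fixes A B :: "'a::comm_ring_1 mat"
  assumes "A \<in> carrier_mat n n" "B \<in> carrier_mat n n" "A * B = 1\<^sub>m n" "B * A = 1\<^sub>m n"
  shows "invertible_mat A"
  using assms unfolding invertible_mat_def inverts_mat_def by auto

lemma invertible_mat_inv:
  fixes A :: "'a::comm_ring_1 mat"
  assumes A: "A \<in> carrier_mat n n" and inv: "invertible_mat A"
  shows "mat_inv A \<in> carrier_mat n n" "A * mat_inv A = 1\<^sub>m n" "mat_inv A * A = 1\<^sub>m n"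
proof -
  obtain B where "inverts_mat A B" "inverts_mat B A" using inv unfolding invertible_mat_def by blast
  hence AB: "A * B = 1\<^sub>m n" and BA: "B * A = 1\<^sub>m (dim_row B)" using A by (auto simp: inverts_mat_def)
  have "dim_col B = n" using arg_cong[OF AB, of dim_col] by simp
  moreover have "dim_row B = n" using A arg_cong[OF BA, of dim_col] by simp
  ultimately have B: "B \<in> carrier_mat n n" by blast
  show "mat_inv A \<in> carrier_mat n n" "A * mat_inv A = 1\<^sub>m n" "mat_inv A * A = 1\<^sub>m n"
    using mat_inv_eqI[OF A B AB] B AB BA by auto
qed

lemma mat_inv_cancel:
  fixes A :: "'a::comm_ring_1 mat"
  assumes A: "A \<in> carrier_mat n n" "invertible_mat A" and C: "dim_row C = n"
  shows "A * (mat_inv A * C) = C" "mat_inv A * (A * C) = C"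
proof -
  note iA = invertible_mat_inv[OF A]
  have C': "C \<in> carrier_mat n (dim_col C)" using C by auto
  have "A * (mat_inv A * C) = (A * mat_inv A) * C" using assoc_mult_mat[OF A(1) iA(1) C'] by simp
  thus "A * (mat_inv A * C) = C" using iA C' by simp
  have "mat_inv A * (A * C) = (mat_inv A * A) * C" using assoc_mult_mat[OF iA(1) A(1) C'] by simp
  thus "mat_inv A * (A * C) = C" using iA C' by simp
qed

lemma invertible_mat_mult:
  fixes A B :: "'a::comm_ring_1 mat"
  assumes A: "A \<in> carrier_mat n n" "invertible_mat A" and B: "B \<in> carrier_mat n n" "invertible_mat B"
  shows "invertible_mat (A * B)" "mat_inv (A * B) = mat_inv B * mat_inv A"
proof -
  note iA = invertible_mat_inv[OF A] and iB = invertible_mat_inv[OF B]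
  have r: "(A * B) * (mat_inv B * mat_inv A) = 1\<^sub>m n"
    using A B iA iB by (simp add: assoc_mult_mat[of _ n n _ n _ n] mat_inv_cancel)
  have l: "(mat_inv B * mat_inv A) * (A * B) = 1\<^sub>m n"
    using A B iA iB by (simp add: assoc_mult_mat[of _ n n _ n _ n] mat_inv_cancel)
  show "invertible_mat (A * B)" "mat_inv (A * B) = mat_inv B * mat_inv A"
    using invertible_matI[OF _ _ r l] mat_inv_eqI[OF _ _ r l] A B iA iB by auto
qed

lemma mat_inv_conj_eqI:
  fixes Y :: "'a::comm_ring_1 mat"
  assumes Y: "Y \<in> carrier_mat n n" "invertible_mat Y" and A: "A \<in> carrier_mat n n"
    and B: "B \<in> carrier_mat n n" and AY: "A * Y = Y * B"
  shows "mat_inv Y * A * Y = B"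
proof -
  have "mat_inv Y * A * Y = mat_inv Y * (A * Y)"
    using invertible_mat_inv[OF Y] Y A by (simp add: assoc_mult_mat[of _ n n _ n _ n])
  thus ?thesis unfolding AY using mat_inv_cancel[OF Y] B by simp
qed

lemma mult_mat_vec_unit_vec:
  fixes A :: "'a::semiring_1 mat"
  shows "A \<in> carrier_mat nr n \<Longrightarrow> i < nr \<Longrightarrow> j < n \<Longrightarrow> (A *\<^sub>v unit_vec n j) $ i = A $$ (i, j)"
  by (simp add: scalar_prod_right_unit)

lemma mat_eq_on_vecI:
  fixes A B :: "'a::comm_ring_1 mat"
  assumes A: "A \<in> carrier_mat nr n" and B: "B \<in> carrier_mat nr n"
    and eq: "\<And>v. v \<in> carrier_vec n \<Longrightarrow> A *\<^sub>v v = B *\<^sub>v v"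
  shows "A = B"
proof (rule eq_matI)
  fix i j assume "i < dim_row B" "j < dim_col B"
  thus "A $$ (i, j) = B $$ (i, j)"
    using eq[OF unit_vec_carrier, of j] mult_mat_vec_unit_vec[OF A] mult_mat_vec_unit_vec[OF B] B
    by (metis carrier_matD)
qed (use A B in auto)

lemma smult_mat_mult_vec:
  fixes A :: "'a::comm_ring_1 mat"
  assumes A: "A \<in> carrier_mat nr nc" and v: "v \<in> carrier_vec nc"
  shows "(a \<cdot>\<^sub>m A) *\<^sub>v v = a \<cdot>\<^sub>v (A *\<^sub>v v)"
proof (rule eq_vecI)
  fix i assume "i < dim_vec (a \<cdot>\<^sub>v (A *\<^sub>v v))"
  hence i: "i < nr" using A by simp
  have "((a \<cdot>\<^sub>m A) *\<^sub>v v) $ i = (\<Sum>j\<in>{0..<nc}. a * (A $$ (i, j) * v $ j))"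
    using A v i by (simp add: scalar_prod_def mult.assoc)
  also have "\<dots> = (a \<cdot>\<^sub>v (A *\<^sub>v v)) $ i" using A v i by (simp add: scalar_prod_def sum_distrib_left)
  finally show "((a \<cdot>\<^sub>m A) *\<^sub>v v) $ i = (a \<cdot>\<^sub>v (A *\<^sub>v v)) $ i" .
qed (use A in simp)

lemma invertible_mat_of_trivial_kernel:
  fixes A :: "'a::field mat"
  assumes A: "A \<in> carrier_mat n n"
    and ker: "\<And>v. v \<in> carrier_vec n \<Longrightarrow> A *\<^sub>v v = 0\<^sub>v n \<Longrightarrow> v = 0\<^sub>v n"
  shows "invertible_mat A"
proof -
  have "det A \<noteq> 0" using det_0_iff_vec_prod_zero[OF A] ker by blast
  hence "A \<in> Units (ring_mat TYPE('a) n undefined)" by (rule det_non_zero_imp_unit[OF A])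
  then obtain B where "B \<in> carrier_mat n n" "B * A = 1\<^sub>m n" "A * B = 1\<^sub>m n"
    unfolding Units_def ring_mat_def by auto
  thus ?thesis using invertible_matI[OF A] by blast
qed

lemma the_inv_into_commute:
  assumes f: "bij_betw f A B" and h: "\<And>x. x \<in> A \<Longrightarrow> h x \<in> A"
    and hk: "\<And>x. x \<in> A \<Longrightarrow> f (h x) = k (f x)" and y: "y \<in> B"
  shows "the_inv_into A f (k y) = h (the_inv_into A f y)"
proof (rule the_inv_into_f_eq[OF bij_betw_imp_inj_on[OF f]])
  have x: "the_inv_into A f y \<in> A" using bij_betw_apply[OF bij_betw_the_inv_into[OF f] y] .
  show "h (the_inv_into A f y) \<in> A" using h[OF x] .
  show "f (h (the_inv_into A f y)) = k y" using hk[OF x] f_the_inv_into_f_bij_betw[OF f y] by simp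
qed

lemma card_carrier_vec: "card (carrier_vec n :: 'a::finite vec set) = card (UNIV :: 'a set) ^ n"
proof -
  have "bij_betw list_of_vec (carrier_vec n) {xs :: 'a list. set xs \<subseteq> UNIV \<and> length xs = n}"
    by (rule bij_betw_byWitness[where f' = vec_of_list]) (auto simp: vec_list list_vec intro: carrier_vecI)
  thus ?thesis using card_lists_length_eq[of "UNIV :: 'a set" n] bij_betw_same_card by fastforce
qed

lemma finite_carrier_vec: "finite (carrier_vec n :: 'a::finite vec set)"
  by (rule card_ge_0_finite) (simp add: card_carrier_vec finite_UNIV_card_ge_0)

definition mat_of_lin :: "nat \<Rightarrow> ('a::zero_neq_one vec \<Rightarrow> 'a vec) \<Rightarrow> 'a mat" where
  "mat_of_lin n f = mat n n (\<lambda>(i, j). f (unit_vec n j) $ i)"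

lemma mat_of_lin_carrier[simp]: "mat_of_lin n f \<in> carrier_mat n n"
  by (simp add: mat_of_lin_def)

lemma mat_of_lin_mult_vec:
  fixes f :: "'a::comm_ring_1 vec \<Rightarrow> 'a vec"
  assumes into: "\<And>v. v \<in> carrier_vec n \<Longrightarrow> f v \<in> carrier_vec n"
    and add: "\<And>u v. u \<in> carrier_vec n \<Longrightarrow> v \<in> carrier_vec n \<Longrightarrow> f (u + v) = f u + f v"
    and smult: "\<And>a v. v \<in> carrier_vec n \<Longrightarrow> f (a \<cdot>\<^sub>v v) = a \<cdot>\<^sub>v f v"
    and v: "v \<in> carrier_vec n"
  shows "mat_of_lin n f *\<^sub>v v = f v"
proof -
  define trunc where "trunc k = vec n (\<lambda>i. if i < k then v $ i else 0)" for k
  have trunc_carrier: "trunc k \<in> carrier_vec n" for k by (simp add: trunc_def)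
  have f0: "f (0\<^sub>v n) = 0\<^sub>v n"
  proof -
    have "0 \<cdot>\<^sub>v 0\<^sub>v n = (0\<^sub>v n :: 'a vec)" by (rule eq_vecI) auto
    hence "f (0\<^sub>v n) = 0 \<cdot>\<^sub>v f (0\<^sub>v n)" using smult[of "0\<^sub>v n" 0] by simp
    also have "\<dots> = 0\<^sub>v n" using into[of "0\<^sub>v n"] by (intro eq_vecI) auto
    finally show ?thesis .
  qed
  have partial: "f (trunc k) $ i = (\<Sum>j<k. f (unit_vec n j) $ i * v $ j)" if "k \<le> n" "i < n" for k i
    using that(1)
  proof (induction k)
    case 0
    have "trunc 0 = 0\<^sub>v n" by (intro eq_vecI) (auto simp: trunc_def)
    thus ?case using f0 \<open>i < n\<close> by simp
  next
    case (Suc k)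
    have "trunc (Suc k) = trunc k + v $ k \<cdot>\<^sub>v unit_vec n k"
      using Suc.prems by (intro eq_vecI) (auto simp: trunc_def less_Suc_eq)
    hence "f (trunc (Suc k)) = f (trunc k) + v $ k \<cdot>\<^sub>v f (unit_vec n k)"
      using add[OF trunc_carrier, of "v $ k \<cdot>\<^sub>v unit_vec n k"] smult[OF unit_vec_carrier] by simp
    moreover have "f (trunc k) \<in> carrier_vec n" "f (unit_vec n k) \<in> carrier_vec n"
      using into trunc_carrier by auto
    ultimately show ?case using Suc \<open>i < n\<close> by (simp add: mult.commute)
  qed
  have "trunc n = v" using v by (intro eq_vecI) (auto simp: trunc_def)
  show ?thesis
  proof (rule eq_vecI)
    fix i assume "i < dim_vec (f v)"
    hence i: "i < n" using into[OF v] by simp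
    have "(mat_of_lin n f *\<^sub>v v) $ i = (\<Sum>j\<in>{0..<n}. f (unit_vec n j) $ i * v $ j)"
      using i v by (simp add: mat_of_lin_def scalar_prod_def)
    also have "\<dots> = f v $ i" using partial[of n i] \<open>trunc n = v\<close> i by (simp add: atLeast0LessThan)
    finally show "(mat_of_lin n f *\<^sub>v v) $ i = f v $ i" .
  qed (use into[OF v] in \<open>simp add: mat_of_lin_def\<close>)
qed

lemma invertible_mat_of_lin:
  fixes f :: "'a::field vec \<Rightarrow> 'a vec"
  assumes into: "\<And>v. v \<in> carrier_vec n \<Longrightarrow> f v \<in> carrier_vec n"
    and add: "\<And>u v. u \<in> carrier_vec n \<Longrightarrow> v \<in> carrier_vec n \<Longrightarrow> f (u + v) = f u + f v"
    and smult: "\<And>a v. v \<in> carrier_vec n \<Longrightarrow> f (a \<cdot>\<^sub>v v) = a \<cdot>\<^sub>v f v"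
    and inj: "inj_on f (carrier_vec n)"
  shows "invertible_mat (mat_of_lin n f)"
proof -
  have f_mat: "mat_of_lin n f *\<^sub>v u = f u" if "u \<in> carrier_vec n" for u
    by (rule mat_of_lin_mult_vec[OF _ _ _ that]) (simp_all add: into add smult)
  show ?thesis
  proof (rule invertible_mat_of_trivial_kernel[OF mat_of_lin_carrier])
    fix v assume v: "v \<in> carrier_vec n" and "mat_of_lin n f *\<^sub>v v = 0\<^sub>v n"
    moreover have "mat_of_lin n f *\<^sub>v 0\<^sub>v n = 0\<^sub>v n"
      using carrier_matD[OF mat_of_lin_carrier[of n f]] by (intro eq_vecI) auto
    ultimately have "f v = f (0\<^sub>v n)" using f_mat[OF v] f_mat[OF zero_carrier_vec] by simp
    thus "v = 0\<^sub>v n" by (rule inj_onD[OF inj _ v zero_carrier_vec])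
  qed
qed

lemma prime_card_of_nat_surj:
  assumes p: "prime p" and card: "card (UNIV :: 'a::{ring_1,finite} set) = p"
  shows "\<exists>k. (a::'a) = of_nat k"
proof -
  have "CHAR('a) dvd p" using CHAR_dvd_CARD[where 'a='a] card by simp
  hence ch: "CHAR('a) = p" using p CHAR_not_1[where 'a='a] unfolding prime_nat_iff by auto
  have "inj_on (of_nat :: nat \<Rightarrow> 'a) {..<p}"
    by (rule inj_onI) (simp add: of_nat_eq_iff_cong_CHAR ch cong_def)
  hence "card ((of_nat :: nat \<Rightarrow> 'a) ` {..<p}) = card (UNIV :: 'a set)"
    using card by (simp add: card_image)
  hence "(of_nat :: nat \<Rightarrow> 'a) ` {..<p} = UNIV" by (intro card_subset_eq) auto
  thus ?thesis by (metis UNIV_I imageE)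
qed

lemma field_aut_field_hom: "field_aut \<sigma> \<Longrightarrow> field_hom \<sigma>"
  unfolding field_aut_def by unfold_locales (auto, metis add_cancel_right_right add_0)

lemma (in comm_ring_hom) mat_trace_mat_hom:
  "A \<in> carrier_mat n n \<Longrightarrow> mat_trace (mat\<^sub>h A) = hom (mat_trace A)"
  unfolding mat_trace_def hom_sum by simp

lemma mat_trace_mult_comm:
  fixes A B :: "'a::comm_ring_1 mat"
  assumes A: "A \<in> carrier_mat m k" and B: "B \<in> carrier_mat k m"
  shows "mat_trace (A * B) = mat_trace (B * A)"
proof -
  have "mat_trace (A * B) = (\<Sum>i<m. \<Sum>j<k. A $$ (i, j) * B $$ (j, i))"
    using A B unfolding mat_trace_def by (simp add: scalar_prod_def atLeast0LessThan)
  also have "\<dots> = (\<Sum>j<k. \<Sum>i<m. B $$ (j, i) * A $$ (i, j))"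
    by (subst sum.swap) (simp add: mult.commute)
  also have "\<dots> = mat_trace (B * A)"
    using A B unfolding mat_trace_def by (simp add: scalar_prod_def atLeast0LessThan)
  finally show ?thesis .
qed

lemma mat_trace_conj:
  fixes A T :: "'a::comm_ring_1 mat"
  assumes T: "T \<in> carrier_mat n n" "invertible_mat T" and A: "A \<in> carrier_mat n n"
  shows "mat_trace (T * A * mat_inv T) = mat_trace A"
  using mat_trace_mult_comm[of "T * A" n n "mat_inv T"] invertible_mat_inv[OF T] mat_inv_cancel(2)[OF T, of A] T A
  by (simp add: assoc_mult_mat[of _ n n _ n _ n])

lemma generates_field_mono: "generates_field S \<Longrightarrow> S \<subseteq> S' \<Longrightarrow> generates_field S'"
  unfolding generates_field_def by blast

lemma field_homs_eq_on_generators: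
  fixes \<sigma> \<tau> :: "'a::field \<Rightarrow> 'b::field"
  assumes "field_hom \<sigma>" "field_hom \<tau>" and "generates_field S" and "\<And>a. a \<in> S \<Longrightarrow> \<sigma> a = \<tau> a"
  shows "\<sigma> = \<tau>"
proof -
  interpret \<sigma>: field_hom \<sigma> by fact
  interpret \<tau>: field_hom \<tau> by fact
  have "is_subfield {a. \<sigma> a = \<tau> a}"
    unfolding is_subfield_def by (simp add: hom_distribs)
  thus ?thesis using assms(3,4) unfolding generates_field_def by auto
qed

section \<open>Skolem-Noether for matrix algebras over finite fields\<close>

definition mat_unit :: "nat \<Rightarrow> nat \<Rightarrow> nat \<Rightarrow> 'a::zero_neq_one mat" where
  "mat_unit m i j = mat m m (\<lambda>(a, b). if a = i \<and> b = j then 1 else 0)"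

definition first_col_mat :: "nat \<Rightarrow> 'a::zero vec \<Rightarrow> 'a mat" where
  "first_col_mat m c = mat m m (\<lambda>(a, b). if b = 0 then c $ a else 0)"

lemma mat_unit_carrier[simp]: "mat_unit m i j \<in> carrier_mat m m"
  by (simp add: mat_unit_def)

lemma first_col_mat_carrier[simp]: "first_col_mat m c \<in> carrier_mat m m"
  by (simp add: first_col_mat_def)

lemma mat_unit_nonzero:
  assumes "0 < m" shows "mat_unit m 0 0 \<noteq> (0\<^sub>m m m :: 'a::zero_neq_one mat)"
proof
  assume "mat_unit m 0 0 = (0\<^sub>m m m :: 'a mat)"
  hence "(mat_unit m 0 0 :: 'a mat) $$ (0, 0) = 0\<^sub>m m m $$ (0, 0)" by simp
  thus False using assms by (simp add: mat_unit_def)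
qed

lemma mat_unit_idem:
  "mat_unit m 0 0 * mat_unit m 0 0 = (mat_unit m 0 0 :: 'a::comm_ring_1 mat)"
proof (rule eq_matI)
  fix i j assume "i < dim_row (mat_unit m 0 0 :: 'a mat)" "j < dim_col (mat_unit m 0 0 :: 'a mat)"
  hence "i < m" "j < m" by (auto simp: mat_unit_def)
  thus "(mat_unit m 0 0 * mat_unit m 0 0) $$ (i, j) = (mat_unit m 0 0 :: 'a mat) $$ (i, j)"
    by (simp add: mat_unit_def scalar_prod_def row_def col_def if_distrib[of "\<lambda>x. x * _"] cong: if_cong)
qed (auto simp: mat_unit_def)

lemma mat_unit_mult_first_col_mat:
  fixes c :: "'a::comm_ring_1 vec"
  assumes i: "i < m"
  shows "mat_unit m 0 i * first_col_mat m c = (c $ i \<cdot>\<^sub>m 1\<^sub>m m) * mat_unit m 0 0"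
proof -
  have "mat_unit m 0 i * first_col_mat m c = c $ i \<cdot>\<^sub>m mat_unit m 0 0"
  proof (rule eq_matI)
    fix a b assume "a < dim_row (c $ i \<cdot>\<^sub>m mat_unit m 0 0)" "b < dim_col (c $ i \<cdot>\<^sub>m mat_unit m 0 0)"
    hence a: "a < m" and b: "b < m" by (auto simp: mat_unit_def)
    have "(mat_unit m 0 i * first_col_mat m c) $$ (a, b)
        = (\<Sum>l\<in>{0..<m}. (if a = 0 \<and> l = i then 1 else 0) * (if b = 0 then c $ l else 0))"
      using a b by (simp add: mat_unit_def first_col_mat_def scalar_prod_def)
    also have "\<dots> = (\<Sum>l\<in>{0..<m}. if l = i then (if a = 0 \<and> b = 0 then c $ i else 0) else 0)"
      by (intro sum.cong) auto
    also have "\<dots> = (c $ i \<cdot>\<^sub>m mat_unit m 0 0) $$ (a, b)"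
      using i a b by (simp add: mat_unit_def)
    finally show "(mat_unit m 0 i * first_col_mat m c) $$ (a, b) = (c $ i \<cdot>\<^sub>m mat_unit m 0 0) $$ (a, b)" .
  qed (auto simp: mat_unit_def first_col_mat_def)
  also have "\<dots> = (c $ i \<cdot>\<^sub>m 1\<^sub>m m) * mat_unit m 0 0"
    by (simp add: mult_smult_assoc_mat[of _ m m _ m] left_mult_one_mat[OF mat_unit_carrier])
  finally show ?thesis .
qed

lemma first_col_mat_mult:
  fixes x :: "'a::comm_ring_1 mat"
  assumes x: "x \<in> carrier_mat m m" and c: "c \<in> carrier_vec m"
  shows "first_col_mat m (x *\<^sub>v c) = x * first_col_mat m c"
proof (rule eq_matI)
  fix a b assume "a < dim_row (x * first_col_mat m c)" "b < dim_col (x * first_col_mat m c)"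
  hence a: "a < m" and b: "b < m" using x by (auto simp: first_col_mat_def)
  have "(x * first_col_mat m c) $$ (a, b) = (\<Sum>l\<in>{0..<m}. x $$ (a, l) * (if b = 0 then c $ l else 0))"
    using a b x by (simp add: first_col_mat_def scalar_prod_def row_def col_def)
  also have "\<dots> = (if b = 0 then (\<Sum>l\<in>{0..<m}. x $$ (a, l) * c $ l) else 0)"
    by (cases "b = 0") auto
  also have "\<dots> = first_col_mat m (x *\<^sub>v c) $$ (a, b)"
    using a b x c by (simp add: first_col_mat_def scalar_prod_def row_def)
  finally show "first_col_mat m (x *\<^sub>v c) $$ (a, b) = (x * first_col_mat m c) $$ (a, b)" by simp
qed (use x in \<open>auto simp: first_col_mat_def\<close>)

lemma first_col_mat_add:
  "c \<in> carrier_vec m \<Longrightarrow> d \<in> carrier_vec m \<Longrightarrow>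
    first_col_mat m (c + d) = first_col_mat m c + first_col_mat m (d :: 'a::comm_ring_1 vec)"
  by (intro eq_matI) (auto simp: first_col_mat_def)

lemma first_col_mat_smult:
  "c \<in> carrier_vec m \<Longrightarrow> first_col_mat m (a \<cdot>\<^sub>v c) = a \<cdot>\<^sub>m first_col_mat m (c :: 'a::comm_ring_1 vec)"
  by (intro eq_matI) (auto simp: first_col_mat_def)

lemma scalar_mat_mult: "(a \<cdot>\<^sub>m 1\<^sub>m m) * (b \<cdot>\<^sub>m 1\<^sub>m m) = (a * b :: 'a::comm_ring_1) \<cdot>\<^sub>m 1\<^sub>m m"
  by (simp add: mult_smult_assoc_mat[of _ m m _ m] mult_smult_distrib[of _ m m _ m]) (intro eq_matI; simp)

lemma scalar_mat_add: "(a \<cdot>\<^sub>m 1\<^sub>m m) + (b \<cdot>\<^sub>m 1\<^sub>m m) = (a + b :: 'a::comm_ring_1) \<cdot>\<^sub>m 1\<^sub>m m"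
  by (intro eq_matI) (auto simp: algebra_simps)

locale mat_embedding =
  fixes m n :: nat and \<iota> :: "'e::field mat \<Rightarrow> 'f::field mat"
  assumes emb_carrier: "x \<in> carrier_mat m m \<Longrightarrow> \<iota> x \<in> carrier_mat n n"
    and emb_add: "x \<in> carrier_mat m m \<Longrightarrow> y \<in> carrier_mat m m \<Longrightarrow> \<iota> (x + y) = \<iota> x + \<iota> y"
    and emb_mult: "x \<in> carrier_mat m m \<Longrightarrow> y \<in> carrier_mat m m \<Longrightarrow> \<iota> (x * y) = \<iota> x * \<iota> y"
    and emb_smult_of_nat: "x \<in> carrier_mat m m \<Longrightarrow> \<iota> (of_nat k \<cdot>\<^sub>m x) = of_nat k \<cdot>\<^sub>m \<iota> x"
    and emb_one: "\<iota> (1\<^sub>m m) = 1\<^sub>m n"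
    and emb_inj: "inj_on \<iota> (carrier_mat m m)"
begin

lemma emb_zero: "\<iota> (0\<^sub>m m m) = 0\<^sub>m n n"
proof -
  have "\<iota> (0\<^sub>m m m) = 0 \<cdot>\<^sub>m \<iota> (0\<^sub>m m m)" using emb_smult_of_nat[of "0\<^sub>m m m" 0] by simp
  also have "\<dots> = 0\<^sub>m n n" using emb_carrier[of "0\<^sub>m m m"] by (intro eq_matI) auto
  finally show ?thesis .
qed

lemma emb_invertible:
  assumes x: "x \<in> carrier_mat m m" "invertible_mat x"
  shows "invertible_mat (\<iota> x)"
proof -
  note ix = invertible_mat_inv[OF x]
  have "\<iota> x * \<iota> (mat_inv x) = 1\<^sub>m n" and "\<iota> (mat_inv x) * \<iota> x = 1\<^sub>m n"
    using ix x by (simp_all flip: emb_mult add: emb_one)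
  thus ?thesis using invertible_matI emb_carrier ix x by blast
qed

lemma emb_scalar_cancel:
  assumes w: "w \<in> carrier_vec n" "w \<noteq> 0\<^sub>v n"
    and eq: "\<iota> (a \<cdot>\<^sub>m 1\<^sub>m m) *\<^sub>v w = \<iota> (b \<cdot>\<^sub>m 1\<^sub>m m) *\<^sub>v w"
  shows "a = b"
proof (rule ccontr)
  assume "a \<noteq> b"
  let ?s = "\<lambda>c. \<iota> (c \<cdot>\<^sub>m 1\<^sub>m m)"
  have s: "?s c \<in> carrier_mat n n" for c by (simp add: emb_carrier)
  have sum: "?s (a - b) *\<^sub>v w + ?s b *\<^sub>v w = ?s b *\<^sub>v w"
    using eq emb_add[of "(a - b) \<cdot>\<^sub>m 1\<^sub>m m" "b \<cdot>\<^sub>m 1\<^sub>m m"] scalar_mat_add[of "a - b" m b]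
      add_mult_distrib_mat_vec[OF s s w(1)] by simp
  have diff: "?s (a - b) *\<^sub>v w = 0\<^sub>v n"
  proof (rule eq_vecI)
    fix i assume "i < dim_vec (0\<^sub>v n :: 'f vec)"
    thus "(?s (a - b) *\<^sub>v w) $ i = 0\<^sub>v n $ i"
      using arg_cong[OF sum, of "\<lambda>v. v $ i"] s[of b] s[of "a - b"] by simp
  qed (use s[of "a - b"] in simp)
  have "(1::'e) \<cdot>\<^sub>m 1\<^sub>m m = 1\<^sub>m m" by (intro eq_matI) auto
  hence "w = ?s (inverse (a - b) * (a - b)) *\<^sub>v w" using \<open>a \<noteq> b\<close> w emb_one by simp
  also have "?s (inverse (a - b) * (a - b)) = ?s (inverse (a - b)) * ?s (a - b)"
    unfolding scalar_mat_mult[symmetric] by (rule emb_mult) simp_all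
  also have "\<dots> *\<^sub>v w = ?s (inverse (a - b)) *\<^sub>v (?s (a - b) *\<^sub>v w)"
    by (rule assoc_mult_mat_vec[OF s s w(1)])
  also have "\<dots> = 0\<^sub>v n" unfolding diff using s[of "inverse (a - b)"] by (intro eq_vecI) auto
  finally show False using w(2) by contradiction
qed

lemma fixed_vector_exists:
  assumes "0 < m"
  obtains w where "w \<in> carrier_vec n" "w \<noteq> 0\<^sub>v n" "\<iota> (mat_unit m 0 0) *\<^sub>v w = w"
proof -
  let ?E = "\<iota> (mat_unit m 0 0)"
  have E: "?E \<in> carrier_mat n n" by (simp add: emb_carrier)
  have "?E \<noteq> 0\<^sub>m n n"
  proof
    assume "?E = 0\<^sub>m n n"
    hence "mat_unit m 0 0 = (0\<^sub>m m m :: 'e mat)"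
      using inj_onD[OF emb_inj, of "mat_unit m 0 0" "0\<^sub>m m m"] emb_zero by simp
    thus False using mat_unit_nonzero[OF assms] by blast
  qed
  hence "\<exists>i<n. \<exists>j<n. ?E $$ (i, j) \<noteq> 0" using E by (auto intro!: eq_matI)
  then obtain i j where ij: "i < n" "j < n" "?E $$ (i, j) \<noteq> 0" by blast
  define w where "w = ?E *\<^sub>v unit_vec n j"
  have w: "w \<in> carrier_vec n" unfolding w_def using E by simp
  have "w $ i \<noteq> 0" using mult_mat_vec_unit_vec[OF E ij(1,2)] ij(3) by (simp add: w_def)
  hence "w \<noteq> 0\<^sub>v n" using ij(1) by auto
  moreover have "?E *\<^sub>v w = w"
  proof -
    have "?E = \<iota> (mat_unit m 0 0 * mat_unit m 0 0)" by (simp only: mat_unit_idem)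
    also have "\<dots> = ?E * ?E" by (rule emb_mult) simp_all
    finally have "?E * ?E = ?E" by (rule sym)
    thus ?thesis unfolding w_def using assoc_mult_mat_vec[OF E E unit_vec_carrier] by simp
  qed
  ultimately show thesis using that w by blast
qed

(* E^m is identified with the left ideal A e_00 of matrices supported in the first column. *)
definition orbit_map :: "'f vec \<Rightarrow> 'e vec \<Rightarrow> 'f vec" where
  "orbit_map w c = \<iota> (first_col_mat m c) *\<^sub>v w"

lemma orbit_map_carrier: "w \<in> carrier_vec n \<Longrightarrow> orbit_map w c \<in> carrier_vec n"
  unfolding orbit_map_def by (rule mult_mat_vec_carrier[OF emb_carrier[OF first_col_mat_carrier]])

lemma orbit_map_add:
  "w \<in> carrier_vec n \<Longrightarrow> c \<in> carrier_vec m \<Longrightarrow> d \<in> carrier_vec m \<Longrightarrow>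
    orbit_map w (c + d) = orbit_map w c + orbit_map w d"
  unfolding orbit_map_def first_col_mat_add using emb_add[OF first_col_mat_carrier first_col_mat_carrier]
    add_mult_distrib_mat_vec[OF emb_carrier[OF first_col_mat_carrier] emb_carrier[OF first_col_mat_carrier]]
  by simp

lemma orbit_map_smult_of_nat:
  "w \<in> carrier_vec n \<Longrightarrow> c \<in> carrier_vec m \<Longrightarrow> orbit_map w (of_nat k \<cdot>\<^sub>v c) = of_nat k \<cdot>\<^sub>v orbit_map w c"
  unfolding orbit_map_def first_col_mat_smult using emb_smult_of_nat[OF first_col_mat_carrier]
    smult_mat_mult_vec[OF emb_carrier[OF first_col_mat_carrier]] by simp

lemma orbit_map_mult_vec:
  assumes "w \<in> carrier_vec n" "x \<in> carrier_mat m m" "c \<in> carrier_vec m"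
  shows "orbit_map w (x *\<^sub>v c) = \<iota> x *\<^sub>v orbit_map w c"
  unfolding orbit_map_def first_col_mat_mult[OF assms(2,3)] emb_mult[OF assms(2) first_col_mat_carrier]
  using assoc_mult_mat_vec[OF emb_carrier[OF assms(2)] emb_carrier[OF first_col_mat_carrier] assms(1)] .

lemma orbit_map_inj:
  assumes w: "w \<in> carrier_vec n" "w \<noteq> 0\<^sub>v n" "\<iota> (mat_unit m 0 0) *\<^sub>v w = w"
  shows "inj_on (orbit_map w) (carrier_vec m)"
proof (rule inj_onI)
  fix c d assume c: "c \<in> carrier_vec m" and d: "d \<in> carrier_vec m" and eq: "orbit_map w c = orbit_map w d"
  \<comment> \<open>the matrix unit e_{0i} reads off the i-th coordinate as a scalar acting on w\<close>
  have coord: "\<iota> (mat_unit m 0 i) *\<^sub>v orbit_map w c = \<iota> (c $ i \<cdot>\<^sub>m 1\<^sub>m m) *\<^sub>v w" if "i < m" for i c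
  proof -
    have "\<iota> (mat_unit m 0 i) * \<iota> (first_col_mat m c) = \<iota> ((c $ i \<cdot>\<^sub>m 1\<^sub>m m) * mat_unit m 0 0)"
      using emb_mult[OF mat_unit_carrier first_col_mat_carrier, of 0 i c]
        mat_unit_mult_first_col_mat[OF that, of c] by simp
    also have "\<dots> = \<iota> (c $ i \<cdot>\<^sub>m 1\<^sub>m m) * \<iota> (mat_unit m 0 0)" by (rule emb_mult) simp_all
    finally have "\<iota> (mat_unit m 0 i) * \<iota> (first_col_mat m c) = \<iota> (c $ i \<cdot>\<^sub>m 1\<^sub>m m) * \<iota> (mat_unit m 0 0)" .
    hence "\<iota> (mat_unit m 0 i) *\<^sub>v orbit_map w c = \<iota> (c $ i \<cdot>\<^sub>m 1\<^sub>m m) *\<^sub>v (\<iota> (mat_unit m 0 0) *\<^sub>v w)"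
      unfolding orbit_map_def
      using assoc_mult_mat_vec[OF emb_carrier[OF mat_unit_carrier] emb_carrier[OF first_col_mat_carrier] w(1)]
        assoc_mult_mat_vec[OF emb_carrier[OF smult_carrier_mat[OF one_carrier_mat]] emb_carrier[OF mat_unit_carrier] w(1)]
      by metis
    thus ?thesis using w(3) by simp
  qed
  show "c = d"
  proof (rule eq_vecI)
    fix i assume "i < dim_vec d"
    hence "i < m" using d by simp
    thus "c $ i = d $ i" using coord[of i c] coord[of i d] eq emb_scalar_cancel[OF w(1,2)] by metis
  qed (use c d in simp)
qed

end

lemma mat_embedding_comp:
  assumes \<alpha>: "mat_embedding m m \<alpha>" and \<iota>: "mat_embedding m n \<iota>"
  shows "mat_embedding m n (\<lambda>x. \<iota> (\<alpha> x))"
proof -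
  interpret \<alpha>: mat_embedding m m \<alpha> by fact
  interpret \<iota>: mat_embedding m n \<iota> by fact
  show ?thesis
  proof
    show "inj_on (\<lambda>x. \<iota> (\<alpha> x)) (carrier_mat m m)"
      using comp_inj_on[OF \<alpha>.emb_inj inj_on_subset[OF \<iota>.emb_inj]] \<alpha>.emb_carrier by (auto simp: comp_def)
  qed (simp_all add: \<alpha>.emb_carrier \<iota>.emb_carrier \<alpha>.emb_add \<iota>.emb_add \<alpha>.emb_mult \<iota>.emb_mult
      \<alpha>.emb_smult_of_nat \<iota>.emb_smult_of_nat \<alpha>.emb_one \<iota>.emb_one)
qed

lemma mat_embedding_map_mat:
  assumes "field_aut \<sigma>"
  shows "mat_embedding m m (map_mat \<sigma>)"
proof -
  interpret field_hom \<sigma> using field_aut_field_hom[OF assms] .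
  show ?thesis
  proof
    show "inj_on (map_mat \<sigma>) (carrier_mat m m)" using mat_hom_inj by (auto intro: inj_onI)
  qed (auto simp: mat_hom_mult mat_hom_one hom_distribs intro!: eq_matI)
qed

lemma mat_embedding_conj:
  fixes T :: "'a::field mat"
  assumes T: "T \<in> carrier_mat m m" "invertible_mat T"
  shows "mat_embedding m m (\<lambda>x. mat_inv T * x * T)"
proof -
  note iT = invertible_mat_inv[OF T]
  show ?thesis
  proof
    fix x y :: "'a mat" assume x: "x \<in> carrier_mat m m" and y: "y \<in> carrier_mat m m"
    show "mat_inv T * (x + y) * T = mat_inv T * x * T + mat_inv T * y * T"
      using x y T iT by (simp add: mult_add_distrib_mat[of _ m m] add_mult_distrib_mat[of _ m m])
    show "mat_inv T * (x * y) * T = mat_inv T * x * T * (mat_inv T * y * T)"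
      using x y T iT by (simp add: assoc_mult_mat[of _ m m _ m _ m] mat_inv_cancel)
  next
    fix x :: "'a mat" and k assume x: "x \<in> carrier_mat m m"
    show "mat_inv T * (of_nat k \<cdot>\<^sub>m x) * T = of_nat k \<cdot>\<^sub>m (mat_inv T * x * T)"
      using x T iT by (simp add: mult_smult_distrib[of _ m m _ m] mult_smult_assoc_mat[of _ m m _ m])
  next
    show "inj_on (\<lambda>x. mat_inv T * x * T) (carrier_mat m m)"
    proof (rule inj_onI)
      fix x y :: "'a mat" assume x: "x \<in> carrier_mat m m" and y: "y \<in> carrier_mat m m"
        and "mat_inv T * x * T = mat_inv T * y * T"
      hence "T * (mat_inv T * x * T) * mat_inv T = T * (mat_inv T * y * T) * mat_inv T" by simp
      thus "x = y" using x y T iT by (simp add: assoc_mult_mat[of _ m m _ m _ m] mat_inv_cancel)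
    qed
  qed (use T iT in simp_all)
qed

definition module_iso :: "nat \<Rightarrow> nat \<Rightarrow> ('e::field mat \<Rightarrow> 'f::field mat) \<Rightarrow> ('e vec \<Rightarrow> 'f vec) \<Rightarrow> bool" where
  "module_iso m n \<iota> F \<longleftrightarrow> bij_betw F (carrier_vec m) (carrier_vec n) \<and>
     (\<forall>c\<in>carrier_vec m. \<forall>d\<in>carrier_vec m. F (c + d) = F c + F d) \<and>
     (\<forall>k. \<forall>c\<in>carrier_vec m. F (of_nat k \<cdot>\<^sub>v c) = of_nat k \<cdot>\<^sub>v F c) \<and>
     (\<forall>x\<in>carrier_mat m m. \<forall>c\<in>carrier_vec m. F (x *\<^sub>v c) = \<iota> x *\<^sub>v F c)"

lemma module_isoD:
  assumes "module_iso m n \<iota> F"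
  shows "bij_betw F (carrier_vec m) (carrier_vec n)"
    and "c \<in> carrier_vec m \<Longrightarrow> d \<in> carrier_vec m \<Longrightarrow> F (c + d) = F c + F d"
    and "c \<in> carrier_vec m \<Longrightarrow> F (of_nat k \<cdot>\<^sub>v c) = of_nat k \<cdot>\<^sub>v F c"
    and "x \<in> carrier_mat m m \<Longrightarrow> c \<in> carrier_vec m \<Longrightarrow> F (x *\<^sub>v c) = \<iota> x *\<^sub>v F c"
  using assms unfolding module_iso_def by blast+

lemma module_iso_exists:
  fixes \<iota> :: "'e::{field,finite} mat \<Rightarrow> 'f::{field,finite} mat"
  assumes "mat_embedding m n \<iota>" and "0 < m" and card: "card (UNIV :: 'e set) ^ m = card (UNIV :: 'f set) ^ n"
  shows "\<exists>F. module_iso m n \<iota> F"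
proof -
  interpret mat_embedding m n \<iota> by fact
  obtain w where w: "w \<in> carrier_vec n" "w \<noteq> 0\<^sub>v n" "\<iota> (mat_unit m 0 0) *\<^sub>v w = w"
    using fixed_vector_exists[OF \<open>0 < m\<close>] .
  have inj: "inj_on (orbit_map w) (carrier_vec m)" using orbit_map_inj[OF w] .
  have "orbit_map w ` carrier_vec m = carrier_vec n"
    by (rule card_subset_eq) (auto simp: card_image[OF inj] card_carrier_vec finite_carrier_vec card orbit_map_carrier[OF w(1)])
  hence "module_iso m n \<iota> (orbit_map w)"
    unfolding module_iso_def bij_betw_def
    using inj orbit_map_add[OF w(1)] orbit_map_smult_of_nat[OF w(1)] orbit_map_mult_vec[OF w(1)] by blast
  thus ?thesis by blast
qed

lemma module_iso_the_inv_into: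
  assumes G: "module_iso m n \<iota> G" and v: "v \<in> carrier_vec n"
  defines "g \<equiv> the_inv_into (carrier_vec m) G"
  shows "g v \<in> carrier_vec m" and "G (g v) = v"
    and "u \<in> carrier_vec n \<Longrightarrow> g (v + u) = g v + g u"
    and "g (of_nat k \<cdot>\<^sub>v v) = of_nat k \<cdot>\<^sub>v g v"
    and "x \<in> carrier_mat m m \<Longrightarrow> g (\<iota> x *\<^sub>v v) = x *\<^sub>v g v"
proof -
  note bij = module_isoD(1)[OF G] and add = module_isoD(2)[OF G]
    and smult = module_isoD(3)[OF G] and mult = module_isoD(4)[OF G]
  have g: "g u \<in> carrier_vec m" "G (g u) = u" if "u \<in> carrier_vec n" for u
    unfolding g_def using bij_betw_apply[OF bij_betw_the_inv_into[OF bij] that]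
      f_the_inv_into_f_bij_betw[OF bij that] by simp_all
  note commute = the_inv_into_commute[OF bij _ _ v, folded g_def]
  show "g v \<in> carrier_vec m" "G (g v) = v" using g[OF v] by simp_all
  show "g (v + u) = g v + g u" if u: "u \<in> carrier_vec n"
    by (rule commute) (simp_all add: g[OF u] add)
  show "g (of_nat k \<cdot>\<^sub>v v) = of_nat k \<cdot>\<^sub>v g v"
    by (rule commute) (simp_all add: smult)
  show "g (\<iota> x *\<^sub>v v) = x *\<^sub>v g v" if x: "x \<in> carrier_mat m m"
    by (rule commute) (use x in \<open>simp_all add: mult\<close>)
qed

lemma module_iso_intertwiner:
  fixes \<iota> \<iota>' :: "'e::field mat \<Rightarrow> 'f::field mat"
  assumes "mat_embedding m n \<iota>" and "mat_embedding m n \<iota>'"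
    and F: "module_iso m n \<iota> F" and G: "module_iso m n \<iota>' G"
    and prime_field: "\<And>a::'f. \<exists>k. a = of_nat k"
  shows "\<exists>Y. Y \<in> carrier_mat n n \<and> invertible_mat Y \<and> (\<forall>x\<in>carrier_mat m m. \<iota> x * Y = Y * \<iota>' x)"
proof -
  interpret \<iota>: mat_embedding m n \<iota> by fact
  interpret \<iota>': mat_embedding m n \<iota>' by fact
  define g where "g = the_inv_into (carrier_vec m) G"
  define y where "y v = F (g v)" for v
  note g = module_iso_the_inv_into[OF G, folded g_def]
  note F_bij = module_isoD(1)[OF F] and F_add = module_isoD(2)[OF F]
    and F_smult = module_isoD(3)[OF F] and F_mult = module_isoD(4)[OF F]
  have y_carrier: "y v \<in> carrier_vec n" if "v \<in> carrier_vec n" for v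
    unfolding y_def using bij_betw_apply[OF F_bij g(1)[OF that]] .
  have y_add: "y (v + u) = y v + y u" if v: "v \<in> carrier_vec n" and u: "u \<in> carrier_vec n" for v u
    unfolding y_def g(3)[OF v u] using F_add[OF g(1)[OF v] g(1)[OF u]] .
  have y_smult: "y (a \<cdot>\<^sub>v v) = a \<cdot>\<^sub>v y v" if v: "v \<in> carrier_vec n" for a v
  proof -
    obtain k where a: "a = of_nat k" using prime_field by blast
    show ?thesis unfolding y_def a g(4)[OF v] using F_smult[OF g(1)[OF v]] .
  qed
  have y_mult: "y (\<iota>' x *\<^sub>v v) = \<iota> x *\<^sub>v y v" if x: "x \<in> carrier_mat m m" and v: "v \<in> carrier_vec n" for x v
    unfolding y_def g(5)[OF v x] using F_mult[OF x g(1)[OF v]] .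
  have y_inj: "inj_on y (carrier_vec n)"
  proof (rule inj_onI)
    fix v v' assume v: "v \<in> carrier_vec n" and v': "v' \<in> carrier_vec n" and eq: "y v = y v'"
    from eq have "g v = g v'" unfolding y_def by (rule inj_onD[OF bij_betw_imp_inj_on[OF F_bij] _ g(1)[OF v] g(1)[OF v']])
    thus "v = v'" using g(2)[OF v] g(2)[OF v'] by metis
  qed
  define Y where "Y = mat_of_lin n y"
  have Y_carrier: "Y \<in> carrier_mat n n" unfolding Y_def by simp
  have Y: "Y *\<^sub>v v = y v" if "v \<in> carrier_vec n" for v
    unfolding Y_def using mat_of_lin_mult_vec[OF y_carrier y_add y_smult that] .
  have "invertible_mat Y" unfolding Y_def using invertible_mat_of_lin[OF y_carrier y_add y_smult y_inj] .
  moreover have "\<iota> x * Y = Y * \<iota>' x" if x: "x \<in> carrier_mat m m" for x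
  proof (rule mat_eq_on_vecI)
    fix v :: "'f vec" assume v: "v \<in> carrier_vec n"
    have "(\<iota> x * Y) *\<^sub>v v = \<iota> x *\<^sub>v y v"
      using assoc_mult_mat_vec[OF \<iota>.emb_carrier[OF x] Y_carrier v] Y[OF v] by simp
    also have "\<dots> = Y *\<^sub>v (\<iota>' x *\<^sub>v v)"
      using y_mult[OF x v] Y[OF mult_mat_vec_carrier[OF \<iota>'.emb_carrier[OF x] v]] by simp
    also have "\<dots> = (Y * \<iota>' x) *\<^sub>v v"
      using assoc_mult_mat_vec[OF Y_carrier \<iota>'.emb_carrier[OF x] v] by simp
    finally show "(\<iota> x * Y) *\<^sub>v v = (Y * \<iota>' x) *\<^sub>v v" .
  qed (use Y_carrier \<iota>.emb_carrier[OF x] \<iota>'.emb_carrier[OF x] in auto)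
  ultimately show ?thesis using Y_carrier by blast
qed

theorem skolem_noether_finite:
  fixes \<iota> \<iota>' :: "'e::{field,finite} mat \<Rightarrow> 'f::{field,finite} mat"
  assumes "mat_embedding m n \<iota>" and "mat_embedding m n \<iota>'" and "0 < m"
    and "card (UNIV :: 'e set) ^ m = card (UNIV :: 'f set) ^ n" and "\<And>a::'f. \<exists>k. a = of_nat k"
  shows "\<exists>Y. Y \<in> carrier_mat n n \<and> invertible_mat Y \<and> (\<forall>x\<in>carrier_mat m m. \<iota> x * Y = Y * \<iota>' x)"
proof -
  obtain F G where "module_iso m n \<iota> F" "module_iso m n \<iota>' G"
    using module_iso_exists[OF assms(1,3,4)] module_iso_exists[OF assms(2,3,4)] by blast
  thus ?thesis using module_iso_intertwiner[OF assms(1,2) _ _ assms(5)] by blast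
qed

section \<open>The action of G on M_m(E)\<close>

lemma abs_irreducible_commutant:
  fixes X :: "'g \<Rightarrow> 'e::field mat"
  assumes irr: "abs_irreducible N m X" and X: "\<And>k. k \<in> N \<Longrightarrow> X k \<in> carrier_mat m m"
    and D: "D \<in> carrier_mat m m" and comm: "\<And>k. k \<in> N \<Longrightarrow> D * X k = X k * D"
    and M: "M \<in> carrier_mat m m"
  shows "D * M = M * D"
proof -
  obtain c where c: "\<forall>i<m. \<forall>j<m. M $$ (i, j) = (\<Sum>k\<in>N. c k * X k $$ (i, j))"
    using irr M unfolding abs_irreducible_def by blast
  have left: "(A * M) $$ (i, j) = (\<Sum>k\<in>N. c k * (A * X k) $$ (i, j))"
    and right: "(M * A) $$ (i, j) = (\<Sum>k\<in>N. c k * (X k * A) $$ (i, j))"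
    if A: "A \<in> carrier_mat m m" and i: "i < m" and j: "j < m" for A i j
  proof -
    have AX: "(A * X k) $$ (i, j) = (\<Sum>l\<in>{0..<m}. A $$ (i, l) * X k $$ (l, j))"
      and XA: "(X k * A) $$ (i, j) = (\<Sum>l\<in>{0..<m}. X k $$ (i, l) * A $$ (l, j))" if "k \<in> N" for k
      using X[OF that] A i j by (simp_all add: scalar_prod_def)
    have "(A * M) $$ (i, j) = (\<Sum>l\<in>{0..<m}. A $$ (i, l) * (\<Sum>k\<in>N. c k * X k $$ (l, j)))"
      using A M i j c by (auto simp: scalar_prod_def intro!: sum.cong)
    also have "\<dots> = (\<Sum>k\<in>N. c k * (A * X k) $$ (i, j))"
      by (simp add: AX sum_distrib_left sum.swap[of _ N] mult.left_commute cong: sum.cong)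
    finally show "(A * M) $$ (i, j) = (\<Sum>k\<in>N. c k * (A * X k) $$ (i, j))" .
    have "(M * A) $$ (i, j) = (\<Sum>l\<in>{0..<m}. (\<Sum>k\<in>N. c k * X k $$ (i, l)) * A $$ (l, j))"
      using A M i j c by (auto simp: scalar_prod_def intro!: sum.cong)
    also have "\<dots> = (\<Sum>k\<in>N. c k * (X k * A) $$ (i, j))"
      by (simp add: XA sum_distrib_left sum_distrib_right sum.swap[of _ N] mult.assoc cong: sum.cong)
    finally show "(M * A) $$ (i, j) = (\<Sum>k\<in>N. c k * (X k * A) $$ (i, j))" .
  qed
  show ?thesis
    by (rule eq_matI) (use D M comm left[OF D] right[OF D] in auto)
qed

locale abs_irred_normal_rep = group +
  fixes N :: "'a set" and m :: nat and X :: "'a \<Rightarrow> 'e::field mat"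
  assumes N_normal: "N \<lhd> G"
    and X_rep: "is_matrep (G\<lparr>carrier := N\<rparr>) m X"
    and X_abs_irred: "abs_irreducible N m X"
    and X_traces_generate: "generates_field {mat_trace (X k) | k. k \<in> N}"
begin

lemma N_subgroup: "subgroup N G"
  using N_normal by (rule normal_imp_subgroup)

lemma N_carrier: "k \<in> N \<Longrightarrow> k \<in> carrier G"
  using subgroup.mem_carrier[OF N_subgroup] .

lemma X_carrier: "k \<in> N \<Longrightarrow> X k \<in> carrier_mat m m"
  using X_rep unfolding is_matrep_def by simp

lemma X_mult: "a \<in> N \<Longrightarrow> b \<in> N \<Longrightarrow> X (a \<otimes> b) = X a * X b"
  using X_rep unfolding is_matrep_def by simp

lemma X_one: "X \<one> = 1\<^sub>m m"
proof -
  have one: "\<one> \<in> N" using subgroup.one_closed[OF N_subgroup] .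
  have X1: "X \<one> \<in> carrier_mat m m" "invertible_mat (X \<one>)"
    using X_rep one unfolding is_matrep_def by simp_all
  have "X \<one> * X \<one> = X \<one>" using X_mult[OF one one] by simp
  hence "X \<one> = mat_inv (X \<one>) * X \<one>" using mat_inv_cancel(2)[OF X1, of "X \<one>"] X1 by simp
  thus ?thesis using invertible_mat_inv(3)[OF X1] by simp
qed

lemma X_inv:
  assumes k: "k \<in> N"
  shows "X (inv k) * X k = 1\<^sub>m m" "X k * X (inv k) = 1\<^sub>m m"
  using X_mult[OF subgroup.m_inv_closed[OF N_subgroup k] k] X_mult[OF k subgroup.m_inv_closed[OF N_subgroup k]]
    N_carrier[OF k] X_one by simp_all

lemma X_invertible:
  assumes k: "k \<in> N"
  shows "invertible_mat (X k)" "mat_inv (X k) = X (inv k)"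
  using invertible_matI[OF X_carrier[OF k] _ X_inv(2,1)[OF k]] mat_inv_eqI[OF X_carrier[OF k] _ X_inv(2,1)[OF k]]
    X_carrier[OF subgroup.m_inv_closed[OF N_subgroup k]] by auto

lemma X_inv_cancel:
  assumes "k \<in> N" and "dim_row C = m"
  shows "X k * (X (inv k) * C) = C"
  using mat_inv_cancel(1)[OF X_carrier X_invertible(1), OF assms(1,1,2)] X_invertible(2)[OF assms(1)] by simp

definition conj_twist :: "'a \<Rightarrow> ('e \<Rightarrow> 'e) \<Rightarrow> 'e mat \<Rightarrow> bool" where
  "conj_twist g \<sigma> T' \<longleftrightarrow> field_aut \<sigma> \<and> T' \<in> carrier_mat m m \<and> invertible_mat T' \<and>
     (\<forall>k\<in>N. map_mat \<sigma> (X (g \<otimes> k \<otimes> inv g)) = T' * X k * mat_inv T')"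

lemma conj_twist_trace:
  assumes g: "g \<in> carrier G" and tw: "conj_twist g \<sigma> T'" and k: "k \<in> N"
  shows "\<sigma> (mat_trace (X k)) = mat_trace (X (inv g \<otimes> k \<otimes> g))"
proof -
  define k' where "k' = inv g \<otimes> k \<otimes> g"
  have k': "k' \<in> N" unfolding k'_def using normal.inv_op_closed1[OF N_normal g k] .
  have "g \<otimes> k' \<otimes> inv g = k"
    unfolding k'_def using g N_carrier[OF k] by (simp add: m_assoc) (simp add: m_assoc[symmetric])
  hence conj: "map_mat \<sigma> (X k) = T' * X k' * mat_inv T'" using tw k' unfolding conj_twist_def by force
  interpret field_hom \<sigma> using tw unfolding conj_twist_def by (simp add: field_aut_field_hom)
  have "\<sigma> (mat_trace (X k)) = mat_trace (map_mat \<sigma> (X k))"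
    using mat_trace_mat_hom[OF X_carrier[OF k]] by simp
  also have "\<dots> = mat_trace (T' * X k' * mat_inv T')" unfolding conj ..
  also have "\<dots> = mat_trace (X k')"
    using tw mat_trace_conj X_carrier[OF k'] unfolding conj_twist_def by blast
  finally show ?thesis unfolding k'_def .
qed

lemma conj_twist_aut_unique:
  assumes g: "g \<in> carrier G" and tw: "conj_twist g \<sigma> T'" and tw': "conj_twist g \<tau> T''"
  shows "\<sigma> = \<tau>"
proof (rule field_homs_eq_on_generators[OF _ _ X_traces_generate])
  show "field_hom \<sigma>" "field_hom \<tau>" using tw tw' unfolding conj_twist_def by (simp_all add: field_aut_field_hom)
  fix a assume "a \<in> {mat_trace (X k) | k. k \<in> N}"
  then obtain k where "k \<in> N" "a = mat_trace (X k)" by blast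
  thus "\<sigma> a = \<tau> a" using conj_twist_trace[OF g tw] conj_twist_trace[OF g tw'] by simp
qed

lemma conj_twist_unique:
  assumes g: "g \<in> carrier G" and tw: "conj_twist g \<sigma> T'" and tw': "conj_twist g \<tau> T''"
    and x: "x \<in> carrier_mat m m"
  shows "mat_inv T' * map_mat \<sigma> x * T' = mat_inv T'' * map_mat \<tau> x * T''"
proof -
  have "\<sigma> = \<tau>" using conj_twist_aut_unique[OF g tw tw'] .
  have T: "T' \<in> carrier_mat m m" "invertible_mat T'" and U: "T'' \<in> carrier_mat m m" "invertible_mat T''"
    using tw tw' unfolding conj_twist_def by blast+
  note iT = invertible_mat_inv[OF T] and iU = invertible_mat_inv[OF U]
  have conj_eq: "T' * X k * mat_inv T' = T'' * X k * mat_inv T''" if "k \<in> N" for k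
    using tw tw' \<open>\<sigma> = \<tau>\<close> that unfolding conj_twist_def by force
  define D where "D = mat_inv T'' * T'"
  have D: "D \<in> carrier_mat m m" unfolding D_def using iU T by simp
  \<comment> \<open>D intertwines X with itself, so it is central by absolute irreducibility\<close>
  have "D * X k = X k * D" if k: "k \<in> N" for k
  proof -
    have "D * X k = mat_inv T'' * ((T' * X k * mat_inv T') * T')"
      using T iT iU X_carrier[OF k] by (simp add: D_def assoc_mult_mat[of _ m m _ m _ m] mat_inv_cancel)
    also have "\<dots> = mat_inv T'' * ((T'' * X k * mat_inv T'') * T')" using conj_eq[OF k] by simp
    also have "\<dots> = X k * D"
      using T U iT iU X_carrier[OF k] by (simp add: D_def assoc_mult_mat[of _ m m _ m _ m] mat_inv_cancel)
    finally show ?thesis .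
  qed
  hence central: "D * Q = Q * D" if "Q \<in> carrier_mat m m" for Q
    using abs_irreducible_commutant[OF X_abs_irred X_carrier D] that by blast
  let ?Q = "mat_inv T'' * map_mat \<tau> x * T''"
  have Q: "?Q \<in> carrier_mat m m" using iU U x by simp
  have "mat_inv T' * map_mat \<sigma> x * T' = mat_inv T' * T'' * (?Q * D)"
    using T U iT iU x \<open>\<sigma> = \<tau>\<close> by (simp add: D_def assoc_mult_mat[of _ m m _ m _ m] mat_inv_cancel)
  also have "\<dots> = mat_inv T' * T'' * (D * ?Q)" using central[OF Q] by simp
  also have "\<dots> = ?Q"
    using T U iT iU x by (simp add: D_def assoc_mult_mat[of _ m m _ m _ m] mat_inv_cancel)
  finally show ?thesis .
qed

lemma conj_twist_mult_normal:
  assumes g: "g \<in> carrier G" and h: "h \<in> N" and tw: "conj_twist g \<sigma> T'"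
  shows "conj_twist (g \<otimes> h) \<sigma> (T' * X h)"
proof -
  have T: "T' \<in> carrier_mat m m" "invertible_mat T'" using tw unfolding conj_twist_def by blast+
  note Xh = X_carrier[OF h] X_invertible[OF h]
  have inv: "mat_inv (T' * X h) = X (inv h) * mat_inv T'"
    using invertible_mat_mult(2)[OF T Xh(1,2)] Xh(3) by simp
  have "map_mat \<sigma> (X (g \<otimes> h \<otimes> k \<otimes> inv (g \<otimes> h))) = T' * X h * X k * mat_inv (T' * X h)" if k: "k \<in> N" for k
  proof -
    have hk: "h \<otimes> k \<otimes> inv h \<in> N" using normal.inv_op_closed2[OF N_normal N_carrier[OF h] k] .
    have "g \<otimes> h \<otimes> k \<otimes> inv (g \<otimes> h) = g \<otimes> (h \<otimes> k \<otimes> inv h) \<otimes> inv g"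
      using g N_carrier[OF h] N_carrier[OF k] by (simp add: inv_mult_group m_assoc)
    hence "map_mat \<sigma> (X (g \<otimes> h \<otimes> k \<otimes> inv (g \<otimes> h))) = T' * X (h \<otimes> k \<otimes> inv h) * mat_inv T'"
      using tw hk unfolding conj_twist_def by simp
    also have "X (h \<otimes> k \<otimes> inv h) = X h * X k * X (inv h)"
      using X_mult subgroup.m_closed[OF N_subgroup] subgroup.m_inv_closed[OF N_subgroup] h k by simp
    finally show ?thesis
      unfolding inv using T Xh X_carrier[OF k] X_carrier[OF subgroup.m_inv_closed[OF N_subgroup h]] invertible_mat_inv[OF T]
      by (simp add: assoc_mult_mat[of _ m m _ m _ m])
  qed
  thus ?thesis using tw T Xh invertible_mat_mult(1)[OF T Xh(1,2)] unfolding conj_twist_def by simp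
qed

lemma conj_twist_normal:
  assumes k: "k \<in> N"
  shows "conj_twist k (\<lambda>a. a) (X k)"
proof -
  have "field_aut (\<lambda>a::'e. a)" unfolding field_aut_def by (simp add: bij_id[unfolded id_def])
  moreover have "map_mat (\<lambda>a. a) (X (k \<otimes> j \<otimes> inv k)) = X k * X j * mat_inv (X k)" if j: "j \<in> N" for j
  proof -
    have "map_mat (\<lambda>a. a) (X (k \<otimes> j \<otimes> inv k)) = X (k \<otimes> j \<otimes> inv k)" by (intro eq_matI) auto
    thus ?thesis using X_mult subgroup.m_closed[OF N_subgroup] subgroup.m_inv_closed[OF N_subgroup]
        X_invertible(2) k j by simp
  qed
  ultimately show ?thesis using X_carrier[OF k] X_invertible[OF k] unfolding conj_twist_def by blast
qed

end

locale galg = abs_irred_normal_rep G N m X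
  for G :: "('a, 'b) monoid_scheme" (structure) and N m and X :: "'a \<Rightarrow> 'e::field mat" +
  fixes \<sigma> :: "'a \<Rightarrow> 'e \<Rightarrow> 'e" and T :: "'a \<Rightarrow> 'e mat"
  assumes conj_twist_T: "g \<in> carrier G \<Longrightarrow> conj_twist g (\<sigma> g) (T g)"
begin

lemma T_carrier: "g \<in> carrier G \<Longrightarrow> T g \<in> carrier_mat m m" "g \<in> carrier G \<Longrightarrow> invertible_mat (T g)"
  using conj_twist_T unfolding conj_twist_def by blast+

lemma galg_act_carrier:
  assumes "g \<in> carrier G" "x \<in> carrier_mat m m"
  shows "galg_act \<sigma> T g x \<in> carrier_mat m m"
  using T_carrier[OF assms(1)] invertible_mat_inv(1)[OF T_carrier[OF assms(1)]] assms(2)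
  unfolding galg_act_def by simp

lemma galg_act_mat_embedding: "g \<in> carrier G \<Longrightarrow> mat_embedding m m (galg_act \<sigma> T g)"
  using mat_embedding_comp[OF mat_embedding_map_mat mat_embedding_conj[OF T_carrier]] conj_twist_T
  unfolding galg_act_def conj_twist_def by blast

lemma galg_act_mult_normal:
  assumes g: "g \<in> carrier G" and h: "h \<in> N" and x: "x \<in> carrier_mat m m"
  shows "galg_act \<sigma> T (g \<otimes> h) x = X (inv h) * galg_act \<sigma> T g x * X h"
proof -
  have gh: "g \<otimes> h \<in> carrier G" using g N_carrier[OF h] by simp
  note Xh = X_carrier[OF h] X_invertible[OF h] and Tg = T_carrier[OF g]
  have "galg_act \<sigma> T (g \<otimes> h) x = mat_inv (T g * X h) * map_mat (\<sigma> g) x * (T g * X h)"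
    unfolding galg_act_def
    using conj_twist_unique[OF gh conj_twist_T[OF gh] conj_twist_mult_normal[OF g h conj_twist_T[OF g]] x] .
  also have "\<dots> = X (inv h) * galg_act \<sigma> T g x * X h"
    unfolding galg_act_def invertible_mat_mult(2)[OF Tg Xh(1,2)] Xh(3)
    using Tg Xh x invertible_mat_inv(1)[OF Tg] X_carrier[OF subgroup.m_inv_closed[OF N_subgroup h]]
    by (simp add: assoc_mult_mat[of _ m m _ m _ m])
  finally show ?thesis .
qed

lemma galg_act_normal:
  assumes k: "k \<in> N" and x: "x \<in> carrier_mat m m"
  shows "galg_act \<sigma> T k x = X (inv k) * x * X k"
proof -
  have "galg_act \<sigma> T k x = mat_inv (X k) * map_mat (\<lambda>a. a) x * X k"
    unfolding galg_act_def using conj_twist_unique[OF N_carrier[OF k] conj_twist_T[OF N_carrier[OF k]] conj_twist_normal[OF k] x] .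
  moreover have "map_mat (\<lambda>a. a) x = x" by (intro eq_matI) auto
  ultimately show ?thesis using X_invertible(2)[OF k] by simp
qed

lemma galg_act_X:
  assumes t: "t \<in> carrier G" and k: "k \<in> N"
  shows "galg_act \<sigma> T t (X k) = X (inv t \<otimes> k \<otimes> t)"
proof -
  define k' where "k' = inv t \<otimes> k \<otimes> t"
  have k': "k' \<in> N" unfolding k'_def using normal.inv_op_closed1[OF N_normal t k] .
  have "t \<otimes> k' \<otimes> inv t = k"
    unfolding k'_def using t N_carrier[OF k] by (simp add: m_assoc) (simp add: m_assoc[symmetric])
  hence "map_mat (\<sigma> t) (X k) = T t * X k' * mat_inv (T t)"
    using conj_twist_T[OF t] k' unfolding conj_twist_def by force
  thus ?thesis
    unfolding galg_act_def k'_def[symmetric] using T_carrier[OF t] X_carrier[OF k']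
    by (simp add: assoc_mult_mat[of _ m m _ m _ m] mat_inv_cancel invertible_mat_inv)
qed

end

section \<open>Extending X to G\<close>

lemma (in normal) coset_representatives:
  obtains r where "\<And>g. g \<in> carrier G \<Longrightarrow> r g \<in> carrier G \<and> inv (r g) \<otimes> g \<in> H"
    and "\<And>g k. g \<in> carrier G \<Longrightarrow> k \<in> H \<Longrightarrow> r (g \<otimes> k) = r g \<and> r (k \<otimes> g) = r g"
proof
  define r where "r g = (SOME t. t \<in> H #> g)" for g
  show "r g \<in> carrier G \<and> inv (r g) \<otimes> g \<in> H" if g: "g \<in> carrier G" for g
  proof -
    have "r g \<in> H #> g" unfolding r_def using rcos_self[OF g is_subgroup] by (rule someI)
    then obtain k where k: "k \<in> H" "r g = k \<otimes> g" unfolding r_coset_def by blast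
    have "inv (r g) \<otimes> g = inv g \<otimes> inv k \<otimes> g" using k g by (simp add: inv_mult_group)
    thus ?thesis using inv_op_closed1[OF g m_inv_closed[OF k(1)]] k g by simp
  qed
  show "r (g \<otimes> k) = r g \<and> r (k \<otimes> g) = r g" if g: "g \<in> carrier G" and k: "k \<in> H" for g k
  proof -
    have kG: "k \<in> carrier G" using k by simp
    have "H #> (g \<otimes> k) = g <# (k <# H)"
      using coset_eq g kG lcos_m_assoc[OF subset g kG] by simp
    also have "\<dots> = H #> g" using coset_eq g kG coset_join2[OF kG is_subgroup k] by simp
    finally have right: "H #> (g \<otimes> k) = H #> g" .
    have left: "H #> (k \<otimes> g) = H #> g"
      using coset_mult_assoc[OF subset kG g] coset_join2[OF kG is_subgroup k] by simp
    show ?thesis unfolding r_def right left by simp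
  qed
qed

locale galg_extension = galg G N m X \<sigma> T + mat_embedding m n \<iota>
  for G :: "('a, 'b) monoid_scheme" (structure) and N m and X :: "'a \<Rightarrow> 'e::field mat"
    and \<sigma> T n and \<iota> :: "'e mat \<Rightarrow> 'f::field mat" +
  fixes Y0 :: "'a \<Rightarrow> 'f mat" and r :: "'a \<Rightarrow> 'a"
  assumes Y0: "t \<in> carrier G \<Longrightarrow> Y0 t \<in> carrier_mat n n \<and> invertible_mat (Y0 t) \<and>
      (\<forall>x\<in>carrier_mat m m. \<iota> x * Y0 t = Y0 t * \<iota> (galg_act \<sigma> T t x))"
    and Y0_normal: "t \<in> N \<Longrightarrow> Y0 t = \<iota> (X t)"
    and r_rep: "g \<in> carrier G \<Longrightarrow> r g \<in> carrier G \<and> inv (r g) \<otimes> g \<in> N"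
    and r_coset: "g \<in> carrier G \<Longrightarrow> k \<in> N \<Longrightarrow> r (g \<otimes> k) = r g \<and> r (k \<otimes> g) = r g"
begin

definition Y :: "'a \<Rightarrow> 'f mat" where
  "Y g = Y0 (r g) * \<iota> (X (inv (r g) \<otimes> g))"

lemma emb_X_carrier: "k \<in> N \<Longrightarrow> \<iota> (X k) \<in> carrier_mat n n"
  using emb_carrier[OF X_carrier] .

lemma emb_X_mult: "a \<in> N \<Longrightarrow> b \<in> N \<Longrightarrow> \<iota> (X (a \<otimes> b)) = \<iota> (X a) * \<iota> (X b)"
  using X_mult emb_mult[OF X_carrier X_carrier] by simp

lemma Y_carrier: "g \<in> carrier G \<Longrightarrow> Y g \<in> carrier_mat n n"
  unfolding Y_def using Y0 r_rep emb_X_carrier by (meson mult_carrier_mat)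

lemma Y_invertible: "g \<in> carrier G \<Longrightarrow> invertible_mat (Y g)"
  unfolding Y_def using Y0 r_rep invertible_mat_mult(1) emb_invertible[OF X_carrier X_invertible(1)] emb_X_carrier
  by meson

lemma Y_intertwines:
  assumes g: "g \<in> carrier G" and x: "x \<in> carrier_mat m m"
  shows "\<iota> x * Y g = Y g * \<iota> (galg_act \<sigma> T g x)"
proof -
  define t where "t = r g"
  define h where "h = inv t \<otimes> g"
  have t: "t \<in> carrier G" and h: "h \<in> N" using r_rep[OF g] unfolding t_def h_def by auto
  have g_th: "g = t \<otimes> h" unfolding h_def using t g by (simp add: m_assoc[symmetric])
  note Y0t = Y0[OF t] and act = galg_act_carrier[OF t x] galg_act_carrier[OF g x]
  have act_h: "galg_act \<sigma> T t x * X h = X h * galg_act \<sigma> T g x"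
    unfolding g_th galg_act_mult_normal[OF t h x]
    using act X_carrier[OF h] X_carrier[OF subgroup.m_inv_closed[OF N_subgroup h]]
      X_inv_cancel[OF h]
    by (simp add: assoc_mult_mat[of _ m m _ m _ m] flip: g_th)
  have "\<iota> x * Y g = (\<iota> x * Y0 t) * \<iota> (X h)"
    unfolding Y_def t_def[symmetric] h_def[symmetric] using emb_carrier[OF x] Y0t emb_X_carrier[OF h]
    by (simp add: assoc_mult_mat[of _ n n _ n _ n])
  also have "\<dots> = Y0 t * \<iota> (galg_act \<sigma> T t x * X h)"
    using Y0t x emb_mult[OF act(1) X_carrier[OF h]] emb_carrier[OF act(1)] emb_X_carrier[OF h]
    by (simp add: assoc_mult_mat[of _ n n _ n _ n])
  also have "\<dots> = Y g * \<iota> (galg_act \<sigma> T g x)"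
    unfolding act_h Y_def t_def[symmetric] h_def[symmetric]
    using Y0t emb_mult[OF X_carrier[OF h] act(2)] emb_carrier[OF act(2)] emb_X_carrier[OF h]
    by (simp add: assoc_mult_mat[of _ n n _ n _ n])
  finally show ?thesis .
qed

lemma Y_normal:
  assumes k: "k \<in> N"
  shows "Y k = \<iota> (X k)"
proof -
  define t where "t = r k"
  have t: "t \<in> carrier G" and tk: "inv t \<otimes> k \<in> N" using r_rep[OF N_carrier[OF k]] unfolding t_def by auto
  have "inv t = (inv t \<otimes> k) \<otimes> inv k" using t N_carrier[OF k] by (simp add: m_assoc)
  hence "inv t \<in> N" using tk k subgroup.m_closed[OF N_subgroup] subgroup.m_inv_closed[OF N_subgroup] by metis
  hence tN: "t \<in> N" using subgroup.m_inv_closed[OF N_subgroup] t by fastforce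
  have "Y k = \<iota> (X (t \<otimes> (inv t \<otimes> k)))"
    unfolding Y_def t_def[symmetric] Y0_normal[OF tN] emb_X_mult[OF tN tk] ..
  also have "t \<otimes> (inv t \<otimes> k) = k" using t N_carrier[OF k] by (simp add: m_assoc[symmetric])
  finally show ?thesis .
qed

lemma Y_mult_normal:
  assumes g: "g \<in> carrier G" and k: "k \<in> N"
  shows "Y (g \<otimes> k) = Y g * Y k" "Y (k \<otimes> g) = Y k * Y g"
proof -
  define t where "t = r g"
  define h where "h = inv t \<otimes> g"
  define k' where "k' = inv t \<otimes> k \<otimes> t"
  have t: "t \<in> carrier G" and h: "h \<in> N" using r_rep[OF g] unfolding t_def h_def by auto
  have k': "k' \<in> N" unfolding k'_def using normal.inv_op_closed1[OF N_normal t k] .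
  have kG: "k \<in> carrier G" using N_carrier[OF k] .
  note Y0t = Y0[OF t]
  note carriers = Y0t emb_X_carrier[OF h] emb_X_carrier[OF k] emb_X_carrier[OF k']
  have Yg: "Y g = Y0 t * \<iota> (X h)" unfolding Y_def t_def h_def ..
  have "inv t \<otimes> (g \<otimes> k) = h \<otimes> k" unfolding h_def using t g kG by (simp add: m_assoc)
  hence "Y (g \<otimes> k) = Y0 t * (\<iota> (X h) * \<iota> (X k))"
    unfolding Y_def r_coset[OF g k, THEN conjunct1] t_def[symmetric] using emb_X_mult[OF h k] by simp
  thus "Y (g \<otimes> k) = Y g * Y k"
    unfolding Yg Y_normal[OF k] using carriers by (simp add: assoc_mult_mat[of _ n n _ n _ n])
  have "inv t \<otimes> (k \<otimes> g) = k' \<otimes> h"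
    unfolding h_def k'_def using t g kG by (simp add: m_assoc) (simp add: m_assoc[symmetric])
  hence "Y (k \<otimes> g) = (Y0 t * \<iota> (galg_act \<sigma> T t (X k))) * \<iota> (X h)"
    unfolding Y_def r_coset[OF g k, THEN conjunct2] t_def[symmetric] galg_act_X[OF t k] k'_def[symmetric]
    using emb_X_mult[OF k' h] carriers by (simp add: assoc_mult_mat[of _ n n _ n _ n])
  also have "Y0 t * \<iota> (galg_act \<sigma> T t (X k)) = \<iota> (X k) * Y0 t"
    using Y0t X_carrier[OF k] by simp
  also have "\<iota> (X k) * Y0 t * \<iota> (X h) = Y k * Y g"
    unfolding Yg Y_normal[OF k] using carriers by (simp add: assoc_mult_mat[of _ n n _ n _ n])
  finally show "Y (k \<otimes> g) = Y k * Y g" .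
qed

end

lemma galg_intertwiners_exist:
  fixes X :: "'a \<Rightarrow> 'e::{field,finite} mat" and \<iota> :: "'e mat \<Rightarrow> 'f::{field,finite} mat"
  assumes "galg G N m X \<sigma> T" and "mat_embedding m n \<iota>" and "0 < m"
    and "card (UNIV :: 'e set) ^ m = card (UNIV :: 'f set) ^ n" and "\<And>a::'f. \<exists>k. a = of_nat k"
  obtains Y0 where "\<And>t. t \<in> carrier G \<Longrightarrow> Y0 t \<in> carrier_mat n n \<and> invertible_mat (Y0 t) \<and>
      (\<forall>x\<in>carrier_mat m m. \<iota> x * Y0 t = Y0 t * \<iota> (galg_act \<sigma> T t x))"
    and "\<And>t. t \<in> N \<Longrightarrow> Y0 t = \<iota> (X t)"
proof -
  interpret galg G N m X \<sigma> T by fact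
  interpret mat_embedding m n \<iota> by fact
  let ?P = "\<lambda>t Y. Y \<in> carrier_mat n n \<and> invertible_mat Y \<and>
      (\<forall>x\<in>carrier_mat m m. \<iota> x * Y = Y * \<iota> (galg_act \<sigma> T t x))"
  have normal: "?P t (\<iota> (X t))" if t: "t \<in> N" for t
  proof -
    have "\<iota> x * \<iota> (X t) = \<iota> (X t) * \<iota> (galg_act \<sigma> T t x)" if x: "x \<in> carrier_mat m m" for x
    proof -
      have "X t * galg_act \<sigma> T t x = x * X t"
        unfolding galg_act_normal[OF t x] using x X_carrier[OF t] X_carrier[OF subgroup.m_inv_closed[OF N_subgroup t]]
          X_inv_cancel[OF t]
        by (simp add: assoc_mult_mat[of _ m m _ m _ m])
      thus ?thesis using emb_mult[OF x X_carrier[OF t]] emb_mult[OF X_carrier[OF t] galg_act_carrier[OF N_carrier[OF t] x]]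
        by simp
    qed
    thus ?thesis using emb_carrier[OF X_carrier[OF t]] emb_invertible[OF X_carrier[OF t] X_invertible(1)[OF t]]
      by blast
  qed
  have "\<exists>Y. ?P t Y" if "t \<in> carrier G" for t
    using skolem_noether_finite[OF assms(2) mat_embedding_comp[OF galg_act_mat_embedding[OF that] assms(2)] assms(3-5)]
    by blast
  hence "?P t (if t \<in> N then \<iota> (X t) else SOME Y. ?P t Y)" if "t \<in> carrier G" for t
    using normal someI_ex[of "?P t"] that by simp
  thus thesis using that[of "\<lambda>t. if t \<in> N then \<iota> (X t) else SOME Y. ?P t Y"] by simp
qed

theorem mainTheorem8:
  fixes G :: "('g, 'b) monoid_scheme"
    and N :: "'g set"
    and p m s :: nat
    and X :: "'g \<Rightarrow> 'e::{field,finite} mat"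
    and \<sigma> :: "'g \<Rightarrow> 'e \<Rightarrow> 'e"
    and T :: "'g \<Rightarrow> 'e mat"
    and \<iota> :: "'e mat \<Rightarrow> 'fp::{field,finite} mat"
  assumes "group G" and "finite (carrier G)" and "N \<lhd> G"
    and "prime p" and "card (UNIV :: 'fp set) = p" and "card (UNIV :: 'e set) = p ^ s"
    \<comment> \<open>X : N \<rightarrow> GL_m(E), absolutely irreducible (affords \<theta> \<in> IBr(N))\<close>
    and "is_matrep (G\<lparr>carrier := N\<rparr>) m X"
    and "abs_irreducible N m X"
    \<comment> \<open>E = F_p[\<theta>]: E generated by the reductions of the values of \<theta> (traces on p-regular elements)\<close>
    and "generates_field {mat_trace (X n) | n. n \<in> N \<and> coprime (group.ord G n) p}"
    \<comment> \<open>G-algebra data: \<sigma>_g \<in> Gal(E/F_p), T_g \<in> GL_m(E) with X(gng^{-1})^{\<sigma>_g} = T_g X(n) T_g^{-1}\<close>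
    and "\<forall>g\<in>carrier G. field_aut (\<sigma> g)"
    and "\<forall>g\<in>carrier G. T g \<in> carrier_mat m m \<and> invertible_mat (T g)"
    and "\<forall>g\<in>carrier G. \<forall>n\<in>N.
           map_mat (\<sigma> g) (X (g \<otimes>\<^bsub>G\<^esub> n \<otimes>\<^bsub>G\<^esub> inv\<^bsub>G\<^esub> g)) = T g * X n * mat_inv (T g)"
    \<comment> \<open>\<iota> : A = M_m(E) \<rightarrow> M_{ms}(F_p) unitary F_p-algebra embedding\<close>
    and "\<forall>x\<in>carrier_mat m m. \<iota> x \<in> carrier_mat (m * s) (m * s)"
    and "\<forall>x\<in>carrier_mat m m. \<forall>y\<in>carrier_mat m m. \<iota> (x + y) = \<iota> x + \<iota> y"
    and "\<forall>x\<in>carrier_mat m m. \<forall>y\<in>carrier_mat m m. \<iota> (x * y) = \<iota> x * \<iota> y"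
    and "\<forall>k::nat. \<forall>x\<in>carrier_mat m m. \<iota> (of_nat k \<cdot>\<^sub>m x) = of_nat k \<cdot>\<^sub>m \<iota> x"
    and "\<iota> (1\<^sub>m m) = 1\<^sub>m (m * s)"
    and "inj_on \<iota> (carrier_mat m m)"
  shows "\<exists>Y :: 'g \<Rightarrow> 'fp mat.
           (\<forall>g\<in>carrier G. Y g \<in> carrier_mat (m * s) (m * s) \<and> invertible_mat (Y g)) \<and>
           (\<forall>g\<in>carrier G. \<forall>x\<in>carrier_mat m m.
              mat_inv (Y g) * \<iota> x * Y g = \<iota> (galg_act \<sigma> T g x)) \<and>
           (\<forall>n\<in>N. Y n = \<iota> (X n)) \<and>
           (\<forall>n\<in>N. \<forall>g\<in>carrier G. Y (g \<otimes>\<^bsub>G\<^esub> n) = Y g * Y n \<and> Y (n \<otimes>\<^bsub>G\<^esub> g) = Y n * Y g)"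
proof -
  have "generates_field {mat_trace (X k) | k. k \<in> N}" by (rule generates_field_mono[OF assms(9)]) blast
  hence "abs_irred_normal_rep G N m X"
    by (intro abs_irred_normal_rep.intro abs_irred_normal_rep_axioms.intro assms(1,3,7,8))
  hence galg: "galg G N m X \<sigma> T"
    using assms(10-12) by (simp add: galg_def galg_axioms_def abs_irred_normal_rep.conj_twist_def)
  have emb: "mat_embedding m (m * s) \<iota>" using assms(13-18) by unfold_locales auto
  have card: "card (UNIV :: 'e set) ^ m = card (UNIV :: 'fp set) ^ (m * s)"
    using assms(5,6) by (simp flip: power_mult add: mult.commute)
  obtain Y0 where "\<And>t. t \<in> carrier G \<Longrightarrow> Y0 t \<in> carrier_mat (m * s) (m * s) \<and> invertible_mat (Y0 t) \<and>
      (\<forall>x\<in>carrier_mat m m. \<iota> x * Y0 t = Y0 t * \<iota> (galg_act \<sigma> T t x))" "\<And>t. t \<in> N \<Longrightarrow> Y0 t = \<iota> (X t)"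
    using galg_intertwiners_exist[OF galg emb _ card prime_card_of_nat_surj[OF assms(4,5)]]
      assms(8) abs_irreducible_def by blast
  moreover obtain r where "\<And>g. g \<in> carrier G \<Longrightarrow> r g \<in> carrier G \<and> inv\<^bsub>G\<^esub> (r g) \<otimes>\<^bsub>G\<^esub> g \<in> N"
    "\<And>g k. g \<in> carrier G \<Longrightarrow> k \<in> N \<Longrightarrow> r (g \<otimes>\<^bsub>G\<^esub> k) = r g \<and> r (k \<otimes>\<^bsub>G\<^esub> g) = r g"
    using normal.coset_representatives[OF assms(3)] by blast
  ultimately interpret galg_extension G N m X \<sigma> T "m * s" \<iota> Y0 r
    using galg emb by (simp add: galg_extension_def galg_extension_axioms_def)
  show ?thesis
    using Y_carrier Y_invertible Y_normal Y_mult_normal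
      mat_inv_conj_eqI[OF Y_carrier Y_invertible emb_carrier emb_carrier[OF galg_act_carrier] Y_intertwines]
    by (intro exI[of _ Y]) auto
qed

end
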